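(* Let $\mathbf{D}\in\mathbb{R}^{d\times n}$ be arbitrary, $1\le s\le n$, $\gamma>0$, and $\mathbf{g}\sim N(\mathbf{0},\mathbf{I}_d)$. Then \[ w(\mathbf{D}S_\gamma)\ \le\ \mathbb{E}\min_{\mathbf{z}\in K_{\gamma,s}^*}\big\|(\mathbf{D}^\top\mathbf{g})^*+\mathbf{z}\big\|_2. \]
   Context: $S_\gamma:=\{\mathbf{x}\in\mathbb{R}^n:\|\mathbf{x}\|_2=1,\ \|\mathbf{x}_T\|_1\ge\gamma\|\mathbf{x}_{T^c}\|_1\text{ for some }T\subset[n],|T|\le s\}$, where $\mathbf{x}_T$ agrees with $\mathbf{x}$ on $T$ and is $0$ elsewhere. $\mathbf{D}S_\gamma=\{\mathbf{D}\mathbf{x}:\mathbf{x}\in S_\gamma\}$ and $w(T)=\mathbb{E}\sup_{\mathbf{x}\in T}\langle\mathbf{g},\mathbf{x}\rangle$ is the Gaussian width. $K_{\gamma,s}:=\{\mathbf{u}\in\mathbb{R}^n: u_\ell\ge0\ \forall\ell,\ \sum_{\ell=1}^s u_\ell\ge\gamma\sum_{\ell=s+1}^n u_\ell\}$ and $K_{\gamma,s}^*:=\{\mathbf{z}\in\mathbb{R}^n:\langle\mathbf{z},\mathbf{u}\rangle\ge0\ \forall\mathbf{u}\in K_{\gamma,s}\}$ is its dual cone. For $\mathbf{x}\in\mathbb{R}^n$, the nonincreasing rearrangement $\mathbf{x}^*$ satisfies $x_1^*\ge\dots\ge x_n^*\ge0$ with $x_i^*=|x_{\pi(i)}|$ for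 some permutation $\pi$. *)

theory Defs
  imports "HOL-Probability.Probability"
begin

text \<open>Vectors in R^m are represented as functions nat => real, with the
  coordinates indexed by {..<m} (0-based) and required to vanish outside.\<close>

definition std_gaussian :: "nat \<Rightarrow> (nat \<Rightarrow> real) measure" where
  "std_gaussian d = PiM {..<d} (\<lambda>_. density lborel std_normal_density)"

definition inner_n :: "nat \<Rightarrow> (nat \<Rightarrow> real) \<Rightarrow> (nat \<Rightarrow> real) \<Rightarrow> real" where
  "inner_n m x y = (\<Sum>i<m. x i * y i)"

definition norm2_n :: "nat \<Rightarrow> (nat \<Rightarrow> real) \<Rightarrow> real" where
  "norm2_n m x = sqrt (\<Sum>i<m. (x i)\<^sup>2)"

definition gauss_width :: "nat \<Rightarrow> (nat \<Rightarrow> real) set \<Rightarrow> real" where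
  "gauss_width d T = (\<integral>g. (SUP x\<in>T. inner_n d g x) \<partial>std_gaussian d)"

definition matvec :: "nat \<Rightarrow> nat \<Rightarrow> (nat \<Rightarrow> nat \<Rightarrow> real) \<Rightarrow> (nat \<Rightarrow> real) \<Rightarrow> (nat \<Rightarrow> real)" where
  "matvec d n D x = (\<lambda>i. if i < d then (\<Sum>j<n. D i j * x j) else 0)"

definition matTvec :: "nat \<Rightarrow> nat \<Rightarrow> (nat \<Rightarrow> nat \<Rightarrow> real) \<Rightarrow> (nat \<Rightarrow> real) \<Rightarrow> (nat \<Rightarrow> real)" where
  "matTvec d n D g = (\<lambda>j. if j < n then (\<Sum>i<d. D i j * g i) else 0)"

definition S_gamma :: "nat \<Rightarrow> nat \<Rightarrow> real \<Rightarrow> (nat \<Rightarrow> real) set" where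
  "S_gamma n s \<gamma> = {x. (\<forall>i\<ge>n. x i = 0) \<and> norm2_n n x = 1 \<and>
      (\<exists>T \<subseteq> {..<n}. card T \<le> s \<and>
          (\<Sum>i\<in>T. \<bar>x i\<bar>) \<ge> \<gamma> * (\<Sum>i\<in>{..<n} - T. \<bar>x i\<bar>))}"

text \<open>K_{gamma,s} (0-based: the first s coordinates are indices 0..s-1).\<close>
definition K_cone :: "nat \<Rightarrow> nat \<Rightarrow> real \<Rightarrow> (nat \<Rightarrow> real) set" where
  "K_cone n s \<gamma> = {u. (\<forall>i\<ge>n. u i = 0) \<and> (\<forall>l<n. u l \<ge> 0) \<and>
      (\<Sum>l<s. u l) \<ge> \<gamma> * (\<Sum>l\<in>{s..<n}. u l)}"

definition dual_cone :: "nat \<Rightarrow> (nat \<Rightarrow> real) set \<Rightarrow> (nat \<Rightarrow> real) set" where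
  "dual_cone n K = {z. (\<forall>i\<ge>n. z i = 0) \<and> (\<forall>u\<in>K. inner_n n z u \<ge> 0)}"

definition rearr :: "nat \<Rightarrow> (nat \<Rightarrow> real) \<Rightarrow> (nat \<Rightarrow> real)" where
  "rearr n x = (\<lambda>i. if i < n then rev (sort (map (\<lambda>j. \<bar>x j\<bar>) [0..<n])) ! i else 0)"

end

theory Submission
  imports Defs "HOL-Combinatorics.Permutations"
begin

text \<open>Write \<open>v = D\<^sup>T g\<close>, so that \<open>\<langle>g, D x\<rangle> = \<langle>v, x\<rangle>\<close>. For \<open>x \<in> S\<^sub>\<gamma>\<close> the rearrangement
  \<open>x\<^sup>*\<close> lies in \<open>K\<^sub>\<gamma>\<^sub>,\<^sub>s\<close> and has unit norm, so for every \<open>z \<in> K\<^sup>*\<close> the rearrangement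
  inequality and Cauchy-Schwarz give
  \<open>\<langle>v, x\<rangle> \<le> \<langle>v\<^sup>*, x\<^sup>*\<rangle> \<le> \<langle>v\<^sup>* + z, x\<^sup>*\<rangle> \<le> \<parallel>v\<^sup>* + z\<parallel>\<close>.
  Taking the supremum over \<open>x\<close> and the infimum over \<open>z\<close> bounds the integrands pointwise.
  The remaining work is measure-theoretic: the infimum over \<open>K\<^sup>*\<close> equals the infimum over
  its countably many rational points (\<open>K\<^sup>*\<close> is closed upwards, since \<open>K\<close> consists of
  nonnegative vectors), which makes the right-hand integrand measurable, and it is dominated
  by \<open>\<Sum>\<^sub>i\<^sub>j |D\<^sub>i\<^sub>j| |g\<^sub>i|\<close>, which makes it integrable.\<close>

section \<open>The nonincreasing rearrangement\<close>

lemma rearr_perm: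
  obtains p where "p permutes {..<n}" "\<forall>i<n. rearr n y i = \<bar>y (p i)\<bar>"
proof -
  define xs where "xs = map (\<lambda>j. \<bar>y j\<bar>) [0..<n]"
  have "mset (rev (sort xs)) = mset xs" by simp
  then obtain p where p: "p permutes {..<length xs}" "permute_list p xs = rev (sort xs)"
    by (rule mset_eq_permutation)
  have len: "length xs = n" by (simp add: xs_def)
  have "rearr n y i = \<bar>y (p i)\<bar>" if i: "i < n" for i
  proof -
    have "p i < n" using p(1) i len permutes_in_image by fastforce
    moreover have "rearr n y i = permute_list p xs ! i" using p(2) by (simp add: rearr_def xs_def i)
    ultimately show ?thesis using i len by (simp add: permute_list_def xs_def)
  qed
  then show ?thesis using that p(1) len by simp
qed

lemma rearr_eq_0: "n \<le> i \<Longrightarrow> rearr n y i = 0"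
  by (simp add: rearr_def)

lemma rearr_nonneg: "0 \<le> rearr n y i"
proof (cases "i < n")
  case True
  obtain p where "\<forall>i<n. rearr n y i = \<bar>y (p i)\<bar>" by (rule rearr_perm)
  then show ?thesis using True by simp
qed (simp add: rearr_def)

lemma rearr_antimono:
  assumes "i \<le> j"
  shows "rearr n y j \<le> rearr n y i"
proof (cases "j < n")
  case True
  define xs where "xs = map (\<lambda>j. \<bar>y j\<bar>) [0..<n]"
  have len: "length (sort xs) = n" by (simp add: xs_def)
  have "sort xs ! (n - Suc j) \<le> sort xs ! (n - Suc i)"
    by (rule sorted_nth_mono) (use True assms len in auto)
  then show ?thesis using True assms len
    by (simp add: rearr_def xs_def[symmetric] rev_nth)
qed (simp add: rearr_eq_0 rearr_nonneg)

lemma rearr_eq_if_sorted_perm: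
  assumes p: "p permutes {..<n}"
    and sorted: "\<forall>a b. a < b \<longrightarrow> b < n \<longrightarrow> \<bar>y (p b)\<bar> \<le> \<bar>y (p a)\<bar>"
    and i: "i < n"
  shows "rearr n y i = \<bar>y (p i)\<bar>"
proof -
  define xs where "xs = map (\<lambda>j. \<bar>y j\<bar>) [0..<n]"
  define L where "L = permute_list p xs"
  have len: "length xs = n" by (simp add: xs_def)
  have len_L: "length L = n" by (simp add: L_def len)
  have L_nth: "L ! k = \<bar>y (p k)\<bar>" if "k < n" for k
  proof -
    have "p k < n" using p that permutes_in_image by fastforce
    then show ?thesis using that len by (simp add: L_def permute_list_def xs_def)
  qed
  have "mset (rev L) = mset xs" using p len by (simp add: L_def)
  moreover have "sorted (rev L)"
    unfolding sorted_iff_nth_mono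
  proof (intro allI impI)
    fix a b assume "a \<le> b" "b < length (rev L)"
    then show "rev L ! a \<le> rev L ! b"
      using sorted len_L L_nth by (cases "a = b") (auto simp: rev_nth)
  qed
  ultimately have "sort xs = rev L" by (rule properties_for_sort)
  then show ?thesis using i L_nth by (simp add: rearr_def xs_def[symmetric])
qed

lemma sum_rearr: "(\<Sum>i<n. f (rearr n y i)) = (\<Sum>j<n. f \<bar>y j\<bar>)"
proof -
  obtain p where p: "p permutes {..<n}" "\<forall>i<n. rearr n y i = \<bar>y (p i)\<bar>" by (rule rearr_perm)
  then show ?thesis using sum.permute[OF p(1), of "\<lambda>j. f \<bar>y j\<bar>"] by simp
qed

lemma norm2_rearr: "norm2_n n (rearr n y) = norm2_n n y"
  using sum_rearr[of "\<lambda>t. t\<^sup>2" n y] by (simp add: norm2_n_def)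

lemma sum_le_sum_lessThan_card:
  fixes b :: "nat \<Rightarrow> real"
  assumes antimono: "\<And>i j. i \<le> j \<Longrightarrow> b j \<le> b i" and "finite T"
  shows "(\<Sum>i\<in>T. b i) \<le> (\<Sum>i<card T. b i)"
proof -
  define m where "m = card T"
  define A where "A = T - {..<m}"
  define B where "B = {..<m} - T"
  have "card T = card (T \<inter> {..<m}) + card A"
    unfolding A_def using \<open>finite T\<close> by (rule card_Int_Diff)
  moreover have "m = card ({..<m} \<inter> T) + card B"
    unfolding B_def using card_Int_Diff[of "{..<m}" T] by simp
  ultimately have card_AB: "card A = card B" by (simp add: m_def Int_commute)
  have "(\<Sum>i\<in>A. b i) \<le> (\<Sum>i\<in>A. b m)"
    by (rule sum_mono) (auto simp: A_def intro: antimono)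
  also have "\<dots> = (\<Sum>i\<in>B. b m)" using card_AB by simp
  also have "\<dots> \<le> (\<Sum>i\<in>B. b i)"
    by (rule sum_mono) (auto simp: B_def intro: antimono)
  finally have "(\<Sum>i\<in>A. b i) \<le> (\<Sum>i\<in>B. b i)" .
  moreover have "(\<Sum>i\<in>T. b i) = (\<Sum>i\<in>T \<inter> {..<m}. b i) + (\<Sum>i\<in>A. b i)"
    unfolding A_def using \<open>finite T\<close> by (rule sum.Int_Diff)
  moreover have "(\<Sum>i<m. b i) = (\<Sum>i\<in>T \<inter> {..<m}. b i) + (\<Sum>i\<in>B. b i)"
    unfolding B_def by (subst Int_commute) (rule sum.Int_Diff, simp)
  ultimately show ?thesis by (simp add: m_def)
qed

lemma sum_abs_le_sum_rearr:
  assumes "T \<subseteq> {..<n}"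
  shows "(\<Sum>j\<in>T. \<bar>y j\<bar>) \<le> (\<Sum>i<card T. rearr n y i)"
proof -
  obtain p where p: "p permutes {..<n}" "\<forall>i<n. rearr n y i = \<bar>y (p i)\<bar>" by (rule rearr_perm)
  define T' where "T' = inv p ` T"
  have inv_p: "inv p permutes {..<n}" using p(1) by (rule permutes_inv)
  have T': "T' \<subseteq> {..<n}" "card T' = card T"
    using assms permutes_in_image[OF inv_p] card_image[OF inj_on_subset[OF permutes_inj[OF inv_p]]]
    by (auto simp: T'_def)
  have "T = p ` T'" by (simp add: T'_def image_comp permutes_inv_o(1)[OF p(1)])
  moreover have "inj_on p T'" using p(1) permutes_inj inj_on_subset by blast
  ultimately have "(\<Sum>j\<in>T. \<bar>y j\<bar>) = (\<Sum>i\<in>T'. \<bar>y (p i)\<bar>)" by (simp add: sum.reindex)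
  also have "\<dots> = (\<Sum>i\<in>T'. rearr n y i)" using T'(1) p(2) by (intro sum.cong) auto
  also have "\<dots> \<le> (\<Sum>i<card T'. rearr n y i)"
    by (rule sum_le_sum_lessThan_card) (use rearr_antimono finite_subset[OF T'(1)] in auto)
  finally show ?thesis using T'(2) by simp
qed

lemma abel_summation:
  fixes a c :: "nat \<Rightarrow> 'a::comm_ring"
  shows "(\<Sum>i<n. a i * c i) = (\<Sum>k<n. (a k - a (Suc k)) * (\<Sum>i<Suc k. c i)) + a n * (\<Sum>i<n. c i)"
  by (induction n) (simp_all add: algebra_simps)

lemma abel_summation_le:
  fixes a c e :: "nat \<Rightarrow> real"
  assumes antimono: "\<And>k. a (Suc k) \<le> a k" and "0 \<le> a n"
    and partial_sums: "\<And>k. k \<le> n \<Longrightarrow> (\<Sum>i<k. c i) \<le> (\<Sum>i<k. e i)"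
  shows "(\<Sum>i<n. a i * c i) \<le> (\<Sum>i<n. a i * e i)"
proof -
  have "(\<Sum>k<n. (a k - a (Suc k)) * (\<Sum>i<Suc k. c i)) \<le> (\<Sum>k<n. (a k - a (Suc k)) * (\<Sum>i<Suc k. e i))"
  proof (rule sum_mono)
    fix k assume "k \<in> {..<n}"
    then have "(\<Sum>i<Suc k. c i) \<le> (\<Sum>i<Suc k. e i)" by (intro partial_sums) simp
    moreover have "0 \<le> a k - a (Suc k)" using antimono[of k] by simp
    ultimately show "(a k - a (Suc k)) * (\<Sum>i<Suc k. c i) \<le> (a k - a (Suc k)) * (\<Sum>i<Suc k. e i)"
      by (rule mult_left_mono)
  qed
  moreover have "a n * (\<Sum>i<n. c i) \<le> a n * (\<Sum>i<n. e i)"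
    by (intro mult_left_mono partial_sums \<open>0 \<le> a n\<close>) simp
  ultimately show ?thesis
    using abel_summation[where n=n and a=a and c=c] abel_summation[where n=n and a=a and c=e]
    by linarith
qed

lemma inner_le_inner_rearr: "inner_n n v x \<le> inner_n n (rearr n v) (rearr n x)"
proof -
  obtain p where p: "p permutes {..<n}" "\<forall>i<n. rearr n v i = \<bar>v (p i)\<bar>" by (rule rearr_perm)
  have "inner_n n v x \<le> (\<Sum>j<n. \<bar>v j\<bar> * \<bar>x j\<bar>)"
    unfolding inner_n_def by (intro sum_mono) (simp only: abs_mult[symmetric] abs_ge_self)
  also have "\<dots> = (\<Sum>i<n. rearr n v i * \<bar>x (p i)\<bar>)"
    using sum.permute[OF p(1), of "\<lambda>j. \<bar>v j\<bar> * \<bar>x j\<bar>"] p(2) by simp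
  also have "\<dots> \<le> (\<Sum>i<n. rearr n v i * rearr n x i)"
  proof (rule abel_summation_le)
    show "rearr n v (Suc k) \<le> rearr n v k" for k by (rule rearr_antimono) simp
    show "0 \<le> rearr n v n" by (rule rearr_nonneg)
    fix k assume "k \<le> n"
    then have sub: "p ` {..<k} \<subseteq> {..<n}"
      using permutes_image[OF p(1)] by (metis image_mono lessThan_subset_iff)
    have inj: "inj_on p {..<k}" by (rule inj_on_subset[OF permutes_inj[OF p(1)] subset_UNIV])
    have "(\<Sum>i<k. \<bar>x (p i)\<bar>) = (\<Sum>j\<in>p ` {..<k}. \<bar>x j\<bar>)" using inj by (simp add: sum.reindex)
    also have "\<dots> \<le> (\<Sum>i<card (p ` {..<k}). rearr n x i)" by (rule sum_abs_le_sum_rearr[OF sub])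
    finally show "(\<Sum>i<k. \<bar>x (p i)\<bar>) \<le> (\<Sum>i<k. rearr n x i)" using inj by (simp add: card_image)
  qed
  finally show ?thesis by (simp add: inner_n_def)
qed

section \<open>The cones \<open>K\<^sub>\<gamma>\<^sub>,\<^sub>s\<close> and \<open>K\<^sup>*\<close>\<close>

lemma rearr_in_K_cone:
  assumes T: "T \<subseteq> {..<n}" "card T \<le> s" "\<gamma> * (\<Sum>j\<in>{..<n} - T. \<bar>x j\<bar>) \<le> (\<Sum>j\<in>T. \<bar>x j\<bar>)"
    and "s \<le> n" and "0 \<le> \<gamma>"
  shows "rearr n x \<in> K_cone n s \<gamma>"
proof -
  let ?u = "rearr n x"
  have "(\<Sum>j\<in>T. \<bar>x j\<bar>) \<le> (\<Sum>i<card T. ?u i)" by (rule sum_abs_le_sum_rearr[OF T(1)])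
  also have "\<dots> \<le> (\<Sum>i<s. ?u i)" by (rule sum_mono2) (use T(2) rearr_nonneg in auto)
  finally have head: "(\<Sum>j\<in>T. \<bar>x j\<bar>) \<le> (\<Sum>i<s. ?u i)" .
  have "(\<Sum>i<s. ?u i) + (\<Sum>i\<in>{s..<n}. ?u i) = (\<Sum>i<n. ?u i)"
    using sum.atLeastLessThan_concat[of 0 s n ?u] \<open>s \<le> n\<close> by (simp add: atLeast0LessThan)
  also have "\<dots> = (\<Sum>j\<in>T. \<bar>x j\<bar>) + (\<Sum>j\<in>{..<n} - T. \<bar>x j\<bar>)"
    using sum_rearr[of "\<lambda>t. t" n x] sum.subset_diff[OF T(1), of "\<lambda>j. \<bar>x j\<bar>"] by simp
  finally have "(\<Sum>i\<in>{s..<n}. ?u i) \<le> (\<Sum>j\<in>{..<n} - T. \<bar>x j\<bar>)" using head by linarith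
  then have "\<gamma> * (\<Sum>i\<in>{s..<n}. ?u i) \<le> (\<Sum>i<s. ?u i)"
    using T(3) head mult_left_mono[OF _ \<open>0 \<le> \<gamma>\<close>] by (meson order_trans)
  then show ?thesis by (simp add: K_cone_def rearr_eq_0 rearr_nonneg)
qed

lemma zero_in_dual_cone: "(\<lambda>_. 0) \<in> dual_cone n K"
  by (simp add: dual_cone_def inner_n_def)

lemma dual_cone_upward_closed:
  assumes K: "\<forall>u\<in>K. \<forall>l<n. 0 \<le> u l"
    and z: "z \<in> dual_cone n K" and le: "\<And>i. i < n \<Longrightarrow> z i \<le> w i"
    and w: "\<And>i. n \<le> i \<Longrightarrow> w i = 0"
  shows "w \<in> dual_cone n K"
  unfolding dual_cone_def
proof (intro CollectI conjI allI impI ballI w)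
  fix u assume u: "u \<in> K"
  have "0 \<le> inner_n n z u" using z u by (simp add: dual_cone_def)
  also have "\<dots> \<le> inner_n n w u"
    unfolding inner_n_def using K u le by (intro sum_mono mult_right_mono) auto
  finally show "0 \<le> inner_n n w u" .
qed

section \<open>Distance to the polar cone\<close>

lemma norm2_nonneg: "0 \<le> norm2_n n x"
  by (simp add: norm2_n_def sum_nonneg)

lemma bdd_below_norm2: "bdd_below ((\<lambda>z. norm2_n n (f z)) ` Z)"
  by (rule bdd_belowI[of _ 0]) (auto simp: norm2_nonneg)

lemma norm2_triangle: "norm2_n n (\<lambda>i. x i + y i) \<le> norm2_n n x + norm2_n n y"
  unfolding norm2_n_def using L2_set_triangle_ineq[of x y "{..<n}"] by (simp add: L2_set_def)

lemma norm2_le_sum_abs: "norm2_n n x \<le> (\<Sum>i<n. \<bar>x i\<bar>)"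
  using L2_set_le_sum_abs[of x "{..<n}"] by (simp add: norm2_n_def L2_set_def)

lemma inner_le_norm2_mult: "inner_n n x y \<le> norm2_n n x * norm2_n n y"
proof -
  have "inner_n n x y \<le> (\<Sum>i<n. \<bar>x i\<bar> * \<bar>y i\<bar>)"
    unfolding inner_n_def by (intro sum_mono) (simp only: abs_mult[symmetric] abs_ge_self)
  also have "\<dots> \<le> norm2_n n x * norm2_n n y"
    using L2_set_mult_ineq[of x y "{..<n}"] by (simp add: norm2_n_def L2_set_def)
  finally show ?thesis .
qed

text \<open>Since \<open>\<parallel>a + z\<parallel> = \<parallel>a - (-z)\<parallel>\<close>, this is the distance from \<open>a\<close> to the polar cone
  \<open>-K\<^sup>*\<close>.\<close>

definition dist_polar :: "nat \<Rightarrow> (nat \<Rightarrow> real) set \<Rightarrow> (nat \<Rightarrow> real) \<Rightarrow> real" where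
  "dist_polar n K a = (INF z\<in>dual_cone n K. norm2_n n (\<lambda>i. a i + z i))"

lemma dist_polar_le: "z \<in> dual_cone n K \<Longrightarrow> dist_polar n K a \<le> norm2_n n (\<lambda>i. a i + z i)"
  unfolding dist_polar_def by (rule cINF_lower[OF bdd_below_norm2])

lemma dist_polar_greatest:
  "(\<And>z. z \<in> dual_cone n K \<Longrightarrow> c \<le> norm2_n n (\<lambda>i. a i + z i)) \<Longrightarrow> c \<le> dist_polar n K a"
  unfolding dist_polar_def using zero_in_dual_cone by (intro cINF_greatest) auto

lemma dist_polar_nonneg: "0 \<le> dist_polar n K a"
  by (rule dist_polar_greatest) (rule norm2_nonneg)

lemma dist_polar_le_norm2: "dist_polar n K a \<le> norm2_n n a"
  using dist_polar_le[OF zero_in_dual_cone] by simp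

lemma inner_le_dist_polar:
  assumes x: "x \<in> S_gamma n s \<gamma>" and "s \<le> n" and "0 \<le> \<gamma>"
  shows "inner_n n v x \<le> dist_polar n (K_cone n s \<gamma>) (rearr n v)"
proof (rule dist_polar_greatest)
  fix z assume z: "z \<in> dual_cone n (K_cone n s \<gamma>)"
  let ?u = "rearr n x"
  obtain T where T: "T \<subseteq> {..<n}" "card T \<le> s" "\<gamma> * (\<Sum>j\<in>{..<n} - T. \<bar>x j\<bar>) \<le> (\<Sum>j\<in>T. \<bar>x j\<bar>)"
    using x unfolding S_gamma_def by blast
  have "?u \<in> K_cone n s \<gamma>" by (rule rearr_in_K_cone[OF T \<open>s \<le> n\<close> \<open>0 \<le> \<gamma>\<close>])
  then have z_u: "0 \<le> inner_n n z ?u" using z by (simp add: dual_cone_def)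
  have "norm2_n n ?u = 1" using x by (simp add: norm2_rearr S_gamma_def)
  then have "inner_n n (\<lambda>i. rearr n v i + z i) ?u \<le> norm2_n n (\<lambda>i. rearr n v i + z i)"
    using inner_le_norm2_mult[of n "\<lambda>i. rearr n v i + z i" ?u] by simp
  moreover have "inner_n n (\<lambda>i. rearr n v i + z i) ?u = inner_n n (rearr n v) ?u + inner_n n z ?u"
    by (simp add: inner_n_def distrib_right sum.distrib)
  ultimately show "inner_n n v x \<le> norm2_n n (\<lambda>i. rearr n v i + z i)"
    using inner_le_inner_rearr[of n v x] z_u by linarith
qed

lemma rational_dual_cone_approx:
  assumes K: "\<forall>u\<in>K. \<forall>l<n. 0 \<le> u l"
    and z: "z \<in> dual_cone n K" and "0 < e"
  obtains w where "w \<in> dual_cone n K" "\<forall>i<n. w i \<in> \<rat>"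
    "norm2_n n (\<lambda>i. a i + w i) \<le> norm2_n n (\<lambda>i. a i + z i) + e"
proof -
  define \<delta> where "\<delta> = e / (real n + 1)"
  have "0 < \<delta>" using \<open>0 < e\<close> by (simp add: \<delta>_def)
  have "\<forall>i. \<exists>q. q \<in> \<rat> \<and> z i < q \<and> q < z i + \<delta>"
  proof
    fix i show "\<exists>q. q \<in> \<rat> \<and> z i < q \<and> q < z i + \<delta>"
      using Rats_dense_in_real[of "z i" "z i + \<delta>"] \<open>0 < \<delta>\<close> by auto
  qed
  from choice[OF this] obtain q where q: "\<forall>i. q i \<in> \<rat> \<and> z i < q i \<and> q i < z i + \<delta>" ..
  define w where "w = (\<lambda>i. if i < n then q i else 0)"
  have "w \<in> dual_cone n K"
    by (rule dual_cone_upward_closed[OF K z]) (use q in \<open>auto simp: w_def less_imp_le\<close>)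
  moreover have "\<forall>i<n. w i \<in> \<rat>" using q by (simp add: w_def)
  moreover have "norm2_n n (\<lambda>i. a i + w i) \<le> norm2_n n (\<lambda>i. a i + z i) + e"
  proof -
    have "norm2_n n (\<lambda>i. w i - z i) \<le> (\<Sum>i<n. \<bar>w i - z i\<bar>)" by (rule norm2_le_sum_abs)
    also have "\<dots> \<le> (\<Sum>i<n. \<delta>)"
    proof (rule sum_mono)
      fix i assume "i \<in> {..<n}"
      then show "\<bar>w i - z i\<bar> \<le> \<delta>" using q[rule_format, of i] by (simp add: w_def)
    qed
    also have "\<dots> \<le> e" using \<open>0 < e\<close> by (simp add: \<delta>_def field_simps)
    finally have "norm2_n n (\<lambda>i. w i - z i) \<le> e" .
    then show ?thesis using norm2_triangle[of n "\<lambda>i. a i + z i" "\<lambda>i. w i - z i"] by simp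
  qed
  ultimately show ?thesis by (rule that)
qed

lemma dist_polar_eq_INF_rational:
  assumes K: "\<forall>u\<in>K. \<forall>l<n. 0 \<le> u l"
  shows "dist_polar n K a = (INF z\<in>{w \<in> dual_cone n K. \<forall>i<n. w i \<in> \<rat>}. norm2_n n (\<lambda>i. a i + z i))"
    (is "_ = (INF z\<in>?Q. _)")
proof (rule antisym)
  have "(\<lambda>_. 0) \<in> ?Q" using zero_in_dual_cone by simp
  then show "dist_polar n K a \<le> (INF z\<in>?Q. norm2_n n (\<lambda>i. a i + z i))"
    by (intro cINF_greatest dist_polar_le) auto
  show "(INF z\<in>?Q. norm2_n n (\<lambda>i. a i + z i)) \<le> dist_polar n K a"
  proof (rule dist_polar_greatest, rule field_le_epsilon)
    fix z and e :: real assume z: "z \<in> dual_cone n K" and e: "0 < e"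
    obtain w where w: "w \<in> ?Q" and close: "norm2_n n (\<lambda>i. a i + w i) \<le> norm2_n n (\<lambda>i. a i + z i) + e"
      using rational_dual_cone_approx[OF K z e, of a] by blast
    have "(INF z\<in>?Q. norm2_n n (\<lambda>i. a i + z i)) \<le> norm2_n n (\<lambda>i. a i + w i)"
      by (rule cINF_lower[OF bdd_below_norm2 w])
    with close show "(INF z\<in>?Q. norm2_n n (\<lambda>i. a i + z i)) \<le> norm2_n n (\<lambda>i. a i + z i) + e"
      by linarith
  qed
qed

section \<open>Measurability and integrability\<close>

lemma countable_rational_vectors:
  "countable {w :: nat \<Rightarrow> real. (\<forall>i\<ge>n. w i = 0) \<and> (\<forall>i<n. w i \<in> \<rat>)}"
proof -
  have "{w. (\<forall>i\<ge>n. w i = 0) \<and> (\<forall>i<n. w i \<in> \<rat>)}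
        \<subseteq> (\<lambda>f i. if i < n then f i else 0) ` PiE {..<n} (\<lambda>_. \<rat>)"
  proof
    fix w assume w: "w \<in> {w. (\<forall>i\<ge>n. w i = 0) \<and> (\<forall>i<n. w i \<in> \<rat>)}"
    then have "w = (\<lambda>i. if i < n then restrict w {..<n} i else 0)" by (intro ext) (auto simp: not_less)
    moreover have "restrict w {..<n} \<in> PiE {..<n} (\<lambda>_. \<rat>)" using w by simp
    ultimately show "w \<in> (\<lambda>f i. if i < n then f i else 0) ` PiE {..<n} (\<lambda>_. \<rat>)" by blast
  qed
  then show ?thesis by (rule countable_subset) (simp add: countable_PiE countable_rat)
qed

lemma borel_measurable_dist_polar:
  assumes K: "\<forall>u\<in>K. \<forall>l<n. 0 \<le> u l"
    and [measurable]: "\<And>i. (\<lambda>\<omega>. Y \<omega> i) \<in> borel_measurable M"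
  shows "(\<lambda>\<omega>. dist_polar n K (Y \<omega>)) \<in> borel_measurable M"
proof -
  have "countable {w \<in> dual_cone n K. \<forall>i<n. w i \<in> \<rat>}"
    by (rule countable_subset[OF _ countable_rational_vectors[of n]]) (auto simp: dual_cone_def)
  then show ?thesis unfolding dist_polar_eq_INF_rational[OF K] norm2_n_def
    by (rule borel_measurable_cINF_real) measurable
qed

text \<open>Among the permutations sorting \<open>|y|\<close> into nonincreasing order (those satisfying \<open>C\<close>),
  each one yields the rearrangement, so a maximum over all permutations expresses it without
  reference to sorting.\<close>

lemma borel_measurable_rearr:
  assumes [measurable]: "\<And>j. (\<lambda>\<omega>. Y \<omega> j) \<in> borel_measurable M"
  shows "(\<lambda>\<omega>. rearr n (Y \<omega>) i) \<in> borel_measurable M"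
proof (cases "i < n")
  case True
  define P where "P = {p. p permutes {..<n}}"
  define C where "C = (\<lambda>p y. \<forall>a b. a < b \<longrightarrow> b < n \<longrightarrow> \<bar>(y::nat \<Rightarrow> real) (p b)\<bar> \<le> \<bar>y (p a)\<bar>)"
  define f where "f = (\<lambda>p \<omega>. if C p (Y \<omega>) then \<bar>Y \<omega> (p i)\<bar> else 0)"
  have "finite P" unfolding P_def by (rule finite_permutations) simp
  have "rearr n (Y \<omega>) i = Max ((\<lambda>p. f p \<omega>) ` P)" for \<omega>
  proof (rule Max_eqI[symmetric])
    show "finite ((\<lambda>p. f p \<omega>) ` P)" using \<open>finite P\<close> by simp
    obtain p where p: "p permutes {..<n}" "\<forall>i<n. rearr n (Y \<omega>) i = \<bar>Y \<omega> (p i)\<bar>"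
      by (rule rearr_perm)
    have "C p (Y \<omega>)" unfolding C_def
    proof (intro allI impI)
      fix a b assume "a < b" "b < n"
      then show "\<bar>Y \<omega> (p b)\<bar> \<le> \<bar>Y \<omega> (p a)\<bar>" using p(2) rearr_antimono[of a b n "Y \<omega>"] by simp
    qed
    then show "rearr n (Y \<omega>) i \<in> (\<lambda>p. f p \<omega>) ` P"
      using p True by (auto simp: f_def P_def intro!: image_eqI[of _ _ p])
    fix t assume "t \<in> (\<lambda>p. f p \<omega>) ` P"
    then obtain p' where "p' permutes {..<n}" "t = f p' \<omega>" by (auto simp: P_def)
    then show "t \<le> rearr n (Y \<omega>) i"
      using rearr_eq_if_sorted_perm[of p' n "Y \<omega>" i] True
      by (auto simp: f_def C_def rearr_nonneg)
  qed
  moreover have "f p \<in> borel_measurable M" for p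
    unfolding f_def C_def by measurable
  ultimately show ?thesis using \<open>finite P\<close> by (simp add: borel_measurable_Max)
qed (simp add: rearr_eq_0)

lemma measurable_std_gaussian_component:
  assumes "i < d"
  shows "(\<lambda>g. g i) \<in> measurable (std_gaussian d) (density lborel std_normal_density)"
  unfolding std_gaussian_def by (rule measurable_component_singleton) (simp add: assms)

lemma borel_measurable_std_gaussian_component:
  "i < d \<Longrightarrow> (\<lambda>g. g i) \<in> borel_measurable (std_gaussian d)"
  using measurable_std_gaussian_component measurable_cong_sets by fastforce

lemma integrable_std_gaussian_component:
  assumes "i < d"
  shows "integrable (std_gaussian d) (\<lambda>g. g i)"
proof -
  let ?N = "density lborel std_normal_density"
  have "distr (std_gaussian d) ?N (\<lambda>g. g i) = ?N"
    unfolding std_gaussian_def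
    by (rule distr_PiM_component) (use prob_space_normal_density assms in auto)
  moreover have "integrable ?N (\<lambda>x. x)"
    using integrable_std_normal_moment[of 1] by (subst integrable_density) auto
  ultimately have "integrable (distr (std_gaussian d) ?N (\<lambda>g. g i)) (\<lambda>x. x)" by simp
  then show ?thesis
    using measurable_std_gaussian_component[OF assms] by (subst (asm) integrable_distr_eq) auto
qed

lemma inner_matvec: "inner_n d g (matvec d n D x) = inner_n n (matTvec d n D g) x"
proof -
  have "inner_n d g (matvec d n D x) = (\<Sum>i<d. \<Sum>j<n. g i * D i j * x j)"
    by (simp add: inner_n_def matvec_def sum_distrib_left mult.assoc)
  also have "\<dots> = (\<Sum>j<n. \<Sum>i<d. g i * D i j * x j)" by (rule sum.swap)
  finally show ?thesis by (simp add: inner_n_def matTvec_def sum_distrib_left mult_ac)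
qed

lemma integrable_dist_polar_rearr_matTvec:
  assumes K: "\<forall>u\<in>K. \<forall>l<n. 0 \<le> u l"
  shows "integrable (std_gaussian d) (\<lambda>g. dist_polar n K (rearr n (matTvec d n D g)))"
proof (rule Bochner_Integration.integrable_bound)
  show "integrable (std_gaussian d) (\<lambda>g. \<Sum>j<n. \<Sum>i<d. \<bar>D i j\<bar> * \<bar>g i\<bar>)"
    by (intro Bochner_Integration.integrable_sum integrable_mult_right integrable_abs
        integrable_std_gaussian_component) simp
  have [measurable]: "(\<lambda>g. matTvec d n D g j) \<in> borel_measurable (std_gaussian d)" for j
    unfolding matTvec_def using borel_measurable_std_gaussian_component by measurable
  show "(\<lambda>g. dist_polar n K (rearr n (matTvec d n D g))) \<in> borel_measurable (std_gaussian d)"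
    by (intro borel_measurable_dist_polar[OF K] borel_measurable_rearr) measurable
  have "dist_polar n K (rearr n (matTvec d n D g)) \<le> (\<Sum>j<n. \<Sum>i<d. \<bar>D i j\<bar> * \<bar>g i\<bar>)" for g
  proof -
    have "dist_polar n K (rearr n (matTvec d n D g)) \<le> norm2_n n (matTvec d n D g)"
      by (metis dist_polar_le_norm2 norm2_rearr)
    also have "\<dots> \<le> (\<Sum>j<n. \<bar>\<Sum>i<d. D i j * g i\<bar>)"
      using norm2_le_sum_abs[of n "matTvec d n D g"] by (simp add: matTvec_def)
    also have "\<dots> \<le> (\<Sum>j<n. \<Sum>i<d. \<bar>D i j\<bar> * \<bar>g i\<bar>)"
      by (intro sum_mono order_trans[OF sum_abs]) (simp add: abs_mult)
    finally show ?thesis .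
  qed
  then show "AE g in std_gaussian d. norm (dist_polar n K (rearr n (matTvec d n D g)))
      \<le> norm (\<Sum>j<n. \<Sum>i<d. \<bar>D i j\<bar> * \<bar>g i\<bar>)"
    by (intro AE_I2) (simp add: dist_polar_nonneg abs_of_nonneg sum_nonneg)
qed

lemma S_gamma_nonempty:
  assumes "1 \<le> s" "s \<le> n" "0 \<le> \<gamma>"
  shows "S_gamma n s \<gamma> \<noteq> {}"
proof -
  define e0 where "e0 = (\<lambda>i::nat. if i = 0 then (1::real) else 0)"
  have "(\<Sum>i<n. (e0 i)\<^sup>2) = (\<Sum>i<n. if i = 0 then 1 else 0)" by (rule sum.cong) (simp_all add: e0_def)
  then have "(\<Sum>i<n. (e0 i)\<^sup>2) = 1" using assms by simp
  moreover have "(\<Sum>i\<in>{..<n} - {0}. \<bar>e0 i\<bar>) = 0" by (simp add: e0_def)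
  ultimately have "e0 \<in> S_gamma n s \<gamma>"
    using assms unfolding S_gamma_def by (intro CollectI conjI exI[of _ "{0}"]) (auto simp: e0_def norm2_n_def)
  then show ?thesis by blast
qed

theorem lemma4p5:
  fixes d n s :: nat and \<gamma> :: real and D :: "nat \<Rightarrow> nat \<Rightarrow> real"
  assumes "1 \<le> s" and "s \<le> n" and "\<gamma> > 0"
  shows "gauss_width d (matvec d n D ` S_gamma n s \<gamma>)
         \<le> (\<integral>g. (INF z\<in>dual_cone n (K_cone n s \<gamma>).
                    norm2_n n (\<lambda>i. rearr n (matTvec d n D g) i + z i)) \<partial>std_gaussian d)"
proof -
  let ?h = "\<lambda>g. dist_polar n (K_cone n s \<gamma>) (rearr n (matTvec d n D g))"
  have K: "\<forall>u\<in>K_cone n s \<gamma>. \<forall>l<n. 0 \<le> u l" by (simp add: K_cone_def)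
  have "(SUP y\<in>matvec d n D ` S_gamma n s \<gamma>. inner_n d g y) \<le> ?h g" for g
    using S_gamma_nonempty[of s n \<gamma>] inner_le_dist_polar[of _ n s \<gamma>] assms
    by (intro cSUP_least) (auto simp: inner_matvec)
  then have "gauss_width d (matvec d n D ` S_gamma n s \<gamma>) \<le> (\<integral>g. ?h g \<partial>std_gaussian d)"
    unfolding gauss_width_def
    by (intro integral_mono' integrable_dist_polar_rearr_matTvec K dist_polar_nonneg)
  then show ?thesis by (simp add: dist_polar_def)
qed

end
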